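(* Let $\mathcal H$ be a Hilbert space of finite dimension $d$, let $\{|e_s\rangle\}_{s=0}^{d-1}$ be an orthonormal basis of $\mathcal H$, let $\{\lambda_s\}_{s=0}^{d-1}$ be a probability distribution, and let $V=\sum_{s=0}^{d-1}\exp\!\left(i\frac{2\pi s}{d}\right)|e_s\rangle\langle e_s|$. Let $\Phi$ be the phase damping channel $\Phi(\rho)=\sum_{j=0}^{d-1}\lambda_j V^j\rho V^{*j}$ on $\mathfrak S(\mathcal H)$. Let $\mathcal A$ be the set of states on $\mathcal H$ that can be written as convex combinations of pure states $|f\rangle\langle f|$ satisfying $|\langle f|e_s\rangle|=\frac{1}{\sqrt d}$ for all $0\le s\le d-1$. Then for every $\rho\in\mathcal A$, $$H_\Phi(\rho)\le -\sum_{j=0}^{d-1}\lambda_j\log\lambda_j .$$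
   Context: $\mathfrak S(\mathcal H)$ denotes the set of density operators (positive, unit-trace operators) on $\mathcal H$, and $S(\sigma)=-\mathrm{Tr}(\sigma\log\sigma)$ is the von Neumann entropy. For a quantum channel (completely positive trace-preserving linear map) $\Phi$ with input space $\mathcal H$, and $\rho\in\mathfrak S(\mathcal H)$, $H_\Phi(\rho):=\min\sum_{j=1}^k\pi_jS(\Phi(\rho_j))$, where the minimum is over all finite decompositions $\rho=\sum_{j=1}^k\pi_j\rho_j$ with $\{\pi_j\}$ a probability distribution and $\rho_j\in\mathfrak S(\mathcal H)$. *)

theory Defs
  imports "Jordan_Normal_Form.Char_Poly" "Jordan_Normal_Form.Schur_Decomposition"
begin

(* Hilbert space H of dimension d is modelled as complex^d (complex vec of dim d);
   operators are d x d complex matrices. *)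

definition braket :: "complex vec \<Rightarrow> complex vec \<Rightarrow> complex" where
  "braket f g = (\<Sum>i<dim_vec f. cnj (f $ i) * g $ i)"

definition ketbra :: "complex vec \<Rightarrow> complex vec \<Rightarrow> complex mat" where
  "ketbra u v = mat (dim_vec u) (dim_vec v) (\<lambda>(i,j). u $ i * cnj (v $ j))"

definition mtrace :: "complex mat \<Rightarrow> complex" where
  "mtrace A = (\<Sum>i<dim_row A. A $$ (i,i))"

definition msum :: "nat \<Rightarrow> nat \<Rightarrow> (nat \<Rightarrow> complex mat) \<Rightarrow> complex mat" where
  "msum d k F = mat d d (\<lambda>ij. \<Sum>j<k. F j $$ ij)"

definition positive_op :: "nat \<Rightarrow> complex mat \<Rightarrow> bool" where
  "positive_op d A \<longleftrightarrow> A \<in> carrier_mat d d \<and>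
     (\<forall>v \<in> carrier_vec d. Im (braket v (A *\<^sub>v v)) = 0 \<and> Re (braket v (A *\<^sub>v v)) \<ge> 0)"

definition density :: "nat \<Rightarrow> complex mat \<Rightarrow> bool" where
  "density d \<rho> \<longleftrightarrow> positive_op d \<rho> \<and> mtrace \<rho> = 1"

(* eigenvalues counted with algebraic multiplicity (roots of the characteristic polynomial);
   the multiset is unique, so the sums below do not depend on the choice *)
definition eigvals :: "complex mat \<Rightarrow> complex list" where
  "eigvals A = (SOME as. char_poly A = (\<Prod>a\<leftarrow>as. [:- a, 1:]) \<and> length as = dim_row A)"

(* von Neumann entropy S(sigma) = - Tr(sigma log sigma) = - sum mu log mu over eigenvalues;
   note 0 * ln 0 = 0 in Isabelle, matching the convention 0 log 0 = 0 *)
definition vN_entropy :: "complex mat \<Rightarrow> real" where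
  "vN_entropy \<sigma> = - (\<Sum>a\<leftarrow>eigvals \<sigma>. Re a * ln (Re a))"

definition H_Phi :: "nat \<Rightarrow> (complex mat \<Rightarrow> complex mat) \<Rightarrow> complex mat \<Rightarrow> real" where
  "H_Phi d \<Phi> \<rho> = Inf {(\<Sum>j<k. p j * vN_entropy (\<Phi> (\<sigma> j))) | k p \<sigma>.
      (\<forall>j<k. p j \<ge> 0 \<and> density d (\<sigma> j)) \<and> (\<Sum>j<k. p j) = 1 \<and>
      \<rho> = msum d k (\<lambda>j. complex_of_real (p j) \<cdot>\<^sub>m \<sigma> j)}"

definition orthonormal_basis :: "nat \<Rightarrow> (nat \<Rightarrow> complex vec) \<Rightarrow> bool" where
  "orthonormal_basis d e \<longleftrightarrow> (\<forall>s<d. e s \<in> carrier_vec d) \<and>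
     (\<forall>s<d. \<forall>t<d. braket (e s) (e t) = (if s = t then 1 else 0))"

definition phaseV :: "nat \<Rightarrow> (nat \<Rightarrow> complex vec) \<Rightarrow> complex mat" where
  "phaseV d e = msum d d (\<lambda>s. exp (\<i> * complex_of_real (2 * pi * real s / real d)) \<cdot>\<^sub>m ketbra (e s) (e s))"

definition phase_damping :: "nat \<Rightarrow> (nat \<Rightarrow> complex vec) \<Rightarrow> (nat \<Rightarrow> real) \<Rightarrow> complex mat \<Rightarrow> complex mat" where
  "phase_damping d e lam \<rho> = msum d d (\<lambda>j. complex_of_real (lam j) \<cdot>\<^sub>m
      ((phaseV d e ^\<^sub>m j) * \<rho> * mat_adjoint (phaseV d e ^\<^sub>m j)))"

definition mub_states :: "nat \<Rightarrow> (nat \<Rightarrow> complex vec) \<Rightarrow> complex mat set" where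
  "mub_states d e = {msum d k (\<lambda>j. complex_of_real (p j) \<cdot>\<^sub>m ketbra (f j) (f j)) | k p f.
      (\<forall>j<k. p j \<ge> 0 \<and> f j \<in> carrier_vec d \<and>
          (\<forall>s<d. cmod (braket (f j) (e s)) = 1 / sqrt (real d))) \<and>
      (\<Sum>j<k. p j) = 1}"

end

theory Submission
  imports Defs "Berlekamp_Zassenhaus.Mahler_Measure"
begin

text \<open>For a unit vector \<open>f\<close> unbiased with respect to the basis \<open>e\<close>, the vectors \<open>V\<^sup>j f\<close>
  (\<open>j < d\<close>) are again an orthonormal basis, because their coefficients \<open>\<omega>\<^sup>s\<^sup>j\<langle>e\<^sub>s|f\<rangle>\<close> differ
  only by \<open>d\<close>-th roots of unity. Hence \<open>\<Phi>(|f\<rangle>\<langle>f|) = \<Sum>\<^sub>j \<lambda>\<^sub>j |V\<^sup>j f\<rangle>\<langle>V\<^sup>j f|\<close> is unitarily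
  diagonal with spectrum \<open>\<lambda>\<close>, and its entropy is \<open>H(\<lambda>)\<close>. A state of \<open>\<A>\<close> is a convex combination of
  such pure states, so this decomposition bounds the infimum defining \<open>H\<^sub>\<Phi>\<close>. That infimum is
  taken over a set bounded below, since entries of \<open>\<Phi>(\<sigma>)\<close>, hence its eigenvalues, hence its
  entropy, are bounded uniformly over density operators \<open>\<sigma>\<close>.\<close>

lemma index_mult_mat_sum:
  assumes "A \<in> carrier_mat n m" "B \<in> carrier_mat m p" "i < n" "j < p"
  shows "(A * B) $$ (i,j) = (\<Sum>k<m. A $$ (i,k) * B $$ (k,j))"
  using assms by (auto simp: scalar_prod_def lessThan_atLeast0 intro!: sum.cong)

lemma index_mult_mat_vec_sum:
  assumes "A \<in> carrier_mat n m" "v \<in> carrier_vec m" "i < n"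
  shows "(A *\<^sub>v v) $ i = (\<Sum>k<m. A $$ (i,k) * v $ k)"
  using assms by (auto simp: scalar_prod_def lessThan_atLeast0 intro!: sum.cong)

lemma mat_adjoint_carrier: "A \<in> carrier_mat n m \<Longrightarrow> mat_adjoint A \<in> carrier_mat m n"
  by (auto simp: mat_adjoint_def)

lemma index_mat_adjoint:
  assumes "A \<in> carrier_mat n m" "i < m" "j < n"
  shows "mat_adjoint A $$ (i,j) = cnj (A $$ (j,i))"
  using assms by (auto simp: mat_adjoint_def mat_of_rows_def)

lemma msum_carrier: "msum d k F \<in> carrier_mat d d"
  by (auto simp: msum_def)

lemma index_msum: "i < d \<Longrightarrow> j < d \<Longrightarrow> msum d k F $$ (i,j) = (\<Sum>l<k. F l $$ (i,j))"
  by (auto simp: msum_def)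

lemma ketbra_carrier: "u \<in> carrier_vec n \<Longrightarrow> v \<in> carrier_vec m \<Longrightarrow> ketbra u v \<in> carrier_mat n m"
  by (auto simp: ketbra_def)

lemma index_ketbra:
  "u \<in> carrier_vec n \<Longrightarrow> v \<in> carrier_vec m \<Longrightarrow> i < n \<Longrightarrow> j < m \<Longrightarrow> ketbra u v $$ (i,j) = u $ i * cnj (v $ j)"
  by (auto simp: ketbra_def)

lemma braket_eq_sum: "f \<in> carrier_vec n \<Longrightarrow> braket f g = (\<Sum>i<n. cnj (f $ i) * g $ i)"
  by (auto simp: braket_def)

lemma cnj_braket: "f \<in> carrier_vec n \<Longrightarrow> g \<in> carrier_vec n \<Longrightarrow> cnj (braket f g) = braket g f"
  by (simp add: braket_eq_sum cnj_sum mult.commute)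

lemma cnj_mult_self: "cnj z * z = complex_of_real (cmod z ^ 2)"
  by (metis complex_norm_square mult.commute)

lemma mult_ketbra_mult_adjoint:
  assumes M: "M \<in> carrier_mat n n" and f: "f \<in> carrier_vec n"
  shows "M * ketbra f f * mat_adjoint M = ketbra (M *\<^sub>v f) (M *\<^sub>v f)"
proof (rule eq_matI)
  have K: "ketbra f f \<in> carrier_mat n n" by (rule ketbra_carrier[OF f f])
  have MK: "M * ketbra f f \<in> carrier_mat n n" using M K by auto
  have Mf: "M *\<^sub>v f \<in> carrier_vec n" using M f by auto
  fix a b assume "a < dim_row (ketbra (M *\<^sub>v f) (M *\<^sub>v f))" "b < dim_col (ketbra (M *\<^sub>v f) (M *\<^sub>v f))"
  hence ab: "a < n" "b < n" using M by (auto simp: ketbra_def)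
  have "(M * ketbra f f * mat_adjoint M) $$ (a,b)
      = (\<Sum>k<n. (\<Sum>l<n. M $$ (a,l) * (f $ l * cnj (f $ k))) * cnj (M $$ (b,k)))"
    using ab by (simp add: index_mult_mat_sum[OF MK mat_adjoint_carrier[OF M]] index_mult_mat_sum[OF M K]
        index_mat_adjoint[OF M] index_ketbra[OF f f])
  also have "\<dots> = (\<Sum>k<n. \<Sum>l<n. (M $$ (a,l) * f $ l) * cnj (M $$ (b,k) * f $ k))"
    by (intro sum.cong refl, subst sum_distrib_right, intro sum.cong refl, simp add: mult_ac)
  also have "\<dots> = (\<Sum>l<n. \<Sum>k<n. (M $$ (a,l) * f $ l) * cnj (M $$ (b,k) * f $ k))"
    by (rule sum.swap)
  also have "\<dots> = (\<Sum>l<n. M $$ (a,l) * f $ l) * cnj (\<Sum>k<n. M $$ (b,k) * f $ k)"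
    by (simp only: cnj_sum sum_product)
  also have "\<dots> = ketbra (M *\<^sub>v f) (M *\<^sub>v f) $$ (a,b)"
    using ab by (simp add: index_ketbra[OF Mf Mf] index_mult_mat_vec_sum[OF M f])
  finally show "(M * ketbra f f * mat_adjoint M) $$ (a,b) = ketbra (M *\<^sub>v f) (M *\<^sub>v f) $$ (a,b)" .
qed (use M f in \<open>auto simp: ketbra_def mat_adjoint_def\<close>)

lemma density_ketbra:
  assumes f: "f \<in> carrier_vec n" and unit: "braket f f = 1"
  shows "density n (ketbra f f)"
proof -
  have K: "ketbra f f \<in> carrier_mat n n" by (rule ketbra_carrier[OF f f])
  have "mtrace (ketbra f f) = braket f f"
    using K f by (simp add: mtrace_def index_ketbra braket_eq_sum mult.commute)
  moreover have "braket v (ketbra f f *\<^sub>v v) = complex_of_real (cmod (braket f v) ^ 2)"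
    if v: "v \<in> carrier_vec n" for v
  proof -
    have "(ketbra f f *\<^sub>v v) $ i = f $ i * braket f v" if "i < n" for i
      using that f v by (simp add: index_mult_mat_vec_sum[OF K v] index_ketbra braket_eq_sum
          sum_distrib_left mult_ac)
    hence "braket v (ketbra f f *\<^sub>v v) = braket v f * braket f v"
      using v by (simp add: braket_eq_sum sum_distrib_right mult.assoc)
    thus ?thesis by (simp add: cnj_braket[OF f v, symmetric] cnj_mult_self)
  qed
  ultimately show ?thesis
    using K unit by (simp add: density_def positive_op_def)
qed

lemma char_poly_eigvals:
  assumes "A \<in> carrier_mat n n"
  shows "char_poly A = (\<Prod>a\<leftarrow>eigvals A. [:- a, 1:])" and "length (eigvals A) = n"
proof -
  have "\<exists>as. char_poly A = (\<Prod>a\<leftarrow>as. [:- a, 1:]) \<and> length as = dim_row A"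
    using char_poly_factorized[OF assms] assms by auto
  from someI_ex[OF this] show "char_poly A = (\<Prod>a\<leftarrow>eigvals A. [:- a, 1:])" "length (eigvals A) = n"
    using assms unfolding eigvals_def by auto
qed

lemma eigenvalue_if_mem_eigvals:
  assumes A: "A \<in> carrier_mat n n" and "a \<in> set (eigvals A)"
  shows "eigenvalue A a"
  unfolding eigenvalue_root_char_poly[OF A] char_poly_eigvals(1)[OF A] by (rule linear_poly_root[OF assms(2)])

lemma vN_entropy_char_poly:
  assumes A: "A \<in> carrier_mat n n" and cp: "char_poly A = (\<Prod>a\<leftarrow>bs. [:- a, 1:])"
  shows "vN_entropy A = - (\<Sum>a\<leftarrow>bs. Re a * ln (Re a))"
proof -
  have "mset (eigvals A) = mset bs"
    using char_poly_eigvals(1)[OF A] cp by (metis reconstruct_poly_monic_defines_mset)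
  hence "sum_mset (mset (map (\<lambda>a. Re a * ln (Re a)) (eigvals A)))
       = sum_mset (mset (map (\<lambda>a. Re a * ln (Re a)) bs))" by simp
  thus ?thesis unfolding vN_entropy_def sum_mset_sum_list by simp
qed

definition real_diag_mat :: "nat \<Rightarrow> (nat \<Rightarrow> real) \<Rightarrow> complex mat" where
  "real_diag_mat n c = mat n n (\<lambda>(i,j). if i = j then complex_of_real (c i) else 0)"

lemma real_diag_mat_carrier: "real_diag_mat n c \<in> carrier_mat n n"
  by (simp add: real_diag_mat_def)

lemma vN_entropy_unitary_conj_real_diag:
  assumes U: "U \<in> carrier_mat n n" and unitary: "mat_adjoint U * U = 1\<^sub>m n"
  shows "vN_entropy (U * real_diag_mat n c * mat_adjoint U) = - (\<Sum>i<n. c i * ln (c i))"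
proof -
  let ?D = "real_diag_mat n c"
  have "U * mat_adjoint U = 1\<^sub>m n"
    by (rule mat_mult_left_right_inverse[OF mat_adjoint_carrier[OF U] U unitary])
  hence "similar_mat (U * ?D * mat_adjoint U) ?D"
    using U unitary real_diag_mat_carrier mat_adjoint_carrier[OF U] by (intro similar_matI) auto
  hence "char_poly (U * ?D * mat_adjoint U) = char_poly ?D"
    by (rule char_poly_similar)
  also have "\<dots> = (\<Prod>a\<leftarrow>diag_mat ?D. [:- a, 1:])"
    by (rule char_poly_upper_triangular[OF real_diag_mat_carrier])
      (simp add: upper_triangular_def real_diag_mat_def)
  finally have "char_poly (U * ?D * mat_adjoint U) = (\<Prod>a\<leftarrow>diag_mat ?D. [:- a, 1:])" .
  moreover have "diag_mat ?D = map (\<lambda>i. complex_of_real (c i)) [0..<n]"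
    by (auto simp: diag_mat_def real_diag_mat_def intro!: map_cong)
  ultimately have "vN_entropy (U * ?D * mat_adjoint U)
      = - (\<Sum>a\<leftarrow>map (\<lambda>i. complex_of_real (c i)) [0..<n]. Re a * ln (Re a))"
    by (intro vN_entropy_char_poly[of _ n])
      (auto intro: mult_carrier_mat U real_diag_mat_carrier mat_adjoint_carrier[OF U])
  thus ?thesis by (simp add: o_def sum_list_sum_nth atLeast0LessThan)
qed

text \<open>The eigenvalues entering \<open>vN_entropy\<close> are not known to be nonnegative at this point, so
  negative \<open>t\<close> must be covered too (on the reals, \<open>ln (- t) = ln t\<close>).\<close>

lemma mult_ln_le_one_plus_square:
  fixes t B :: real
  assumes "\<bar>t\<bar> \<le> B"
  shows "t * ln t \<le> 1 + B\<^sup>2"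
proof (cases "t = 0")
  case False
  define s where "s = \<bar>t\<bar>"
  have s0: "s > 0" using False by (simp add: s_def)
  have "ln t = ln s" unfolding s_def by (cases "t \<ge> 0") (auto simp: ln_minus[of t, symmetric])
  hence "t * ln t \<le> s * \<bar>ln s\<bar>"
    by (simp add: s_def abs_mult[symmetric] del: abs_mult)
  also have "s * \<bar>ln s\<bar> \<le> 1 + B\<^sup>2"
  proof (cases "s \<ge> 1")
    case True
    have "s * \<bar>ln s\<bar> \<le> s * s" using True s0 ln_le_minus_one[OF s0] by (simp add: mult_left_mono)
    also have "\<dots> \<le> B * B"
      using mult_mono[OF assms assms order_trans[OF abs_ge_zero assms] abs_ge_zero] by (simp add: s_def)
    finally show ?thesis by (simp add: power2_eq_square)
  next
    case False
    have "- ln s \<le> 1/s - 1" using ln_le_minus_one[of "1/s"] s0 by (simp add: ln_div)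
    hence "s * \<bar>ln s\<bar> \<le> s * (1/s - 1)" using s0 False by (intro mult_left_mono) auto
    thus ?thesis using s0 by (simp add: right_diff_distrib) (smt (verit) zero_le_power2)
  qed
  finally show ?thesis .
qed simp

lemma norm_index_mult_mat_le:
  fixes A B :: "complex mat"
  assumes A: "A \<in> carrier_mat n n" and B: "B \<in> carrier_mat n n"
    and bA: "\<And>i j. i < n \<Longrightarrow> j < n \<Longrightarrow> cmod (A $$ (i,j)) \<le> \<alpha>"
    and bB: "\<And>i j. i < n \<Longrightarrow> j < n \<Longrightarrow> cmod (B $$ (i,j)) \<le> \<beta>"
    and ij: "i < n" "j < n"
  shows "cmod ((A * B) $$ (i,j)) \<le> real n * \<alpha> * \<beta>"
proof -
  have "cmod ((A * B) $$ (i,j)) \<le> (\<Sum>k<n. cmod (A $$ (i,k) * B $$ (k,j)))"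
    unfolding index_mult_mat_sum[OF A B ij] by (rule norm_sum)
  also have "\<dots> \<le> (\<Sum>k<n. \<alpha> * \<beta>)"
    using ij bA bB
    by (intro sum_mono) (auto simp: norm_mult intro!: mult_mono intro: order_trans[OF norm_ge_zero])
  finally show ?thesis by simp
qed

lemma eigenvalue_norm_le:
  fixes A :: "complex mat"
  assumes A: "A \<in> carrier_mat n n"
    and bA: "\<And>i j. i < n \<Longrightarrow> j < n \<Longrightarrow> cmod (A $$ (i,j)) \<le> K"
    and "eigenvalue A a"
  shows "cmod a \<le> real n * K"
proof -
  obtain v where "eigenvector A v a" using assms(3) unfolding eigenvalue_def by blast
  hence v: "v \<in> carrier_vec n" and "v \<noteq> 0\<^sub>v n" and Av: "A *\<^sub>v v = a \<cdot>\<^sub>v v"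
    using A unfolding eigenvector_def by auto
  then obtain k where k: "k < n" "v $ k \<noteq> 0" by (metis eq_vecI index_zero_vec carrier_vecD)
  define N where "N = (\<Sum>k<n. cmod (v $ k))"
  have "cmod (v $ k) \<le> N" unfolding N_def using k by (intro member_le_sum) auto
  hence Npos: "N > 0" using k by (smt (verit) zero_less_norm_iff)
  have "cmod a * N = (\<Sum>i<n. cmod ((A *\<^sub>v v) $ i))"
    unfolding N_def sum_distrib_left using Av v by (intro sum.cong refl) (simp add: norm_mult)
  also have "\<dots> \<le> (\<Sum>i<n. \<Sum>k<n. K * cmod (v $ k))"
  proof (rule sum_mono)
    fix i assume "i \<in> {..<n}"
    hence "cmod ((A *\<^sub>v v) $ i) \<le> (\<Sum>k<n. cmod (A $$ (i,k) * v $ k))"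
      by (simp add: index_mult_mat_vec_sum[OF A v] norm_sum)
    also have "\<dots> \<le> (\<Sum>k<n. K * cmod (v $ k))"
      using \<open>i \<in> {..<n}\<close> bA by (intro sum_mono) (auto simp: norm_mult intro!: mult_right_mono)
    finally show "cmod ((A *\<^sub>v v) $ i) \<le> (\<Sum>k<n. K * cmod (v $ k))" .
  qed
  also have "\<dots> = (real n * K) * N" by (simp add: N_def sum_distrib_left mult.assoc)
  finally show ?thesis using Npos by simp
qed

lemma vN_entropy_lower_bound:
  fixes A :: "complex mat"
  assumes A: "A \<in> carrier_mat n n"
    and bA: "\<And>i j. i < n \<Longrightarrow> j < n \<Longrightarrow> cmod (A $$ (i,j)) \<le> K"
  shows "vN_entropy A \<ge> - (real n * (1 + (real n * K)\<^sup>2))"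
proof -
  have "(\<Sum>a\<leftarrow>eigvals A. Re a * ln (Re a)) \<le> (\<Sum>a\<leftarrow>eigvals A. 1 + (real n * K)\<^sup>2)"
  proof (rule sum_list_mono)
    fix a assume "a \<in> set (eigvals A)"
    hence "\<bar>Re a\<bar> \<le> real n * K"
      using eigenvalue_norm_le[OF A bA eigenvalue_if_mem_eigvals[OF A]] abs_Re_le_cmod order_trans by blast
    then show "Re a * ln (Re a) \<le> 1 + (real n * K)\<^sup>2" by (rule mult_ln_le_one_plus_square)
  qed
  then show ?thesis unfolding vN_entropy_def by (simp add: sum_list_triv char_poly_eigvals(2)[OF A])
qed

lemma braket_two_point_vec:
  fixes \<sigma> :: "complex mat" and x :: complex
  assumes S: "\<sigma> \<in> carrier_mat d d" and ab: "a < d" "b < d"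
  defines "v \<equiv> vec d (\<lambda>i. (if i = a then 1 else 0) + (if i = b then x else 0))"
  shows "braket v (\<sigma> *\<^sub>v v) = \<sigma> $$ (a,a) + \<sigma> $$ (b,a) * cnj x + (\<sigma> $$ (a,b) + \<sigma> $$ (b,b) * cnj x) * x"
proof -
  have two_point_sum: "(\<Sum>k<d. g k * ((if k = a then 1 else 0) + (if k = b then y else 0))) = g a + g b * y"
    for g :: "nat \<Rightarrow> complex" and y
  proof -
    have "(\<Sum>k<d. g k * ((if k = a then 1 else 0) + (if k = b then y else 0)))
        = (\<Sum>k<d. if k = a then g k else 0) + (\<Sum>k<d. if k = b then g k * y else 0)"
      by (subst sum.distrib[symmetric], intro sum.cong refl, simp add: distrib_left)
    thus ?thesis using ab by (simp add: sum.delta)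
  qed
  have v: "v \<in> carrier_vec d" by (simp add: v_def)
  have \<sigma>v: "(\<sigma> *\<^sub>v v) $ i = \<sigma> $$ (i,a) + \<sigma> $$ (i,b) * x" if "i < d" for i
    using two_point_sum[of "\<lambda>k. \<sigma> $$ (i,k)" x] index_mult_mat_vec_sum[OF S v that] by (simp add: v_def)
  have "braket v (\<sigma> *\<^sub>v v) = (\<Sum>i<d. (\<sigma> $$ (i,a) + \<sigma> $$ (i,b) * x) * ((if i = a then 1 else 0) + (if i = b then cnj x else 0)))"
    unfolding braket_eq_sum[OF v]
  proof (intro sum.cong refl)
    fix i assume "i \<in> {..<d}"
    hence i: "i < d" by simp
    have "cnj (v $ i) = (if i = a then 1 else 0) + (if i = b then cnj x else 0)"
      using i by (simp add: v_def)
    then show "cnj (v $ i) * (\<sigma> *\<^sub>v v) $ i = (\<sigma> $$ (i,a) + \<sigma> $$ (i,b) * x) * ((if i = a then 1 else 0) + (if i = b then cnj x else 0))"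
      unfolding \<sigma>v[OF i] by (rule ssubst) (rule mult.commute)
  qed
  also have "\<dots> = \<sigma> $$ (a,a) + \<sigma> $$ (a,b) * x + (\<sigma> $$ (b,a) + \<sigma> $$ (b,b) * x) * cnj x"
    by (rule two_point_sum)
  finally show ?thesis by (simp add: algebra_simps)
qed

lemma positive_op_two_point_form:
  assumes "positive_op d \<sigma>" and "c < d" "c' < d"
  shows "Im (\<sigma> $$ (c,c) + \<sigma> $$ (c',c) * cnj x + (\<sigma> $$ (c,c') + \<sigma> $$ (c',c') * cnj x) * x) = 0 \<and>
    Re (\<sigma> $$ (c,c) + \<sigma> $$ (c',c) * cnj x + (\<sigma> $$ (c,c') + \<sigma> $$ (c',c') * cnj x) * x) \<ge> 0"
proof -
  have S: "\<sigma> \<in> carrier_mat d d"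
    and pos: "\<And>v. v \<in> carrier_vec d \<Longrightarrow> Im (braket v (\<sigma> *\<^sub>v v)) = 0 \<and> Re (braket v (\<sigma> *\<^sub>v v)) \<ge> 0"
    using assms(1) unfolding positive_op_def by auto
  show ?thesis
    using pos[of "vec d (\<lambda>i. (if i = c then 1 else 0) + (if i = c' then x else 0))"]
      braket_two_point_vec[OF S assms(2,3), of x] by simp
qed

lemma density_diag_entry:
  assumes D: "density d \<sigma>" and c: "c < d"
  shows "Im (\<sigma> $$ (c,c)) = 0" "Re (\<sigma> $$ (c,c)) \<ge> 0" "Re (\<sigma> $$ (c,c)) \<le> 1"
proof -
  have pos: "positive_op d \<sigma>" and S: "\<sigma> \<in> carrier_mat d d" and tr: "mtrace \<sigma> = 1"
    using D by (auto simp: density_def positive_op_def)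
  have diag: "Im (\<sigma> $$ (i,i)) = 0 \<and> Re (\<sigma> $$ (i,i)) \<ge> 0" if "i < d" for i
    using positive_op_two_point_form[OF pos that that, of 0] by simp
  thus "Im (\<sigma> $$ (c,c)) = 0" "Re (\<sigma> $$ (c,c)) \<ge> 0" using c by auto
  have "(\<Sum>i<d. \<sigma> $$ (i,i)) = 1" using tr S by (simp add: mtrace_def)
  hence "(\<Sum>i<d. Re (\<sigma> $$ (i,i))) = 1" by (metis Re_sum one_complex.simps(1))
  thus "Re (\<sigma> $$ (c,c)) \<le> 1"
    using member_le_sum[of c "{..<d}" "\<lambda>i. Re (\<sigma> $$ (i,i))"] diag c by auto
qed

lemma density_entry_norm_le:
  assumes D: "density d \<sigma>" and ab: "a < d" "b < d"
  shows "cmod (\<sigma> $$ (a,b)) \<le> 2"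
proof -
  define P where "P = \<sigma> $$ (a,b)"
  note da = density_diag_entry[OF D ab(1)] and db = density_diag_entry[OF D ab(2)]
  have "\<bar>Re P\<bar> \<le> 1 \<and> \<bar>Im P\<bar> \<le> 1"
  proof (cases "a = b")
    case True
    then show ?thesis using da by (simp add: P_def)
  next
    case False
    define R where "R = \<sigma> $$ (b,a)"
    have pos: "positive_op d \<sigma>" using D by (simp add: density_def)
    have q: "Im (\<sigma> $$ (a,a) + R * cnj x + (P + \<sigma> $$ (b,b) * cnj x) * x) = 0 \<and>
             Re (\<sigma> $$ (a,a) + R * cnj x + (P + \<sigma> $$ (b,b) * cnj x) * x) \<ge> 0" for x
      using positive_op_two_point_form[OF pos ab] by (simp add: P_def R_def)
    \<comment> \<open>test the quadratic form against \<open>e\<^sub>a + x e\<^sub>b\<close> for \<open>x = \<plusminus>1, \<plusminus>\<i>\<close>\<close>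
    have "Im R + Im P = 0" "Re (\<sigma> $$ (a,a)) + Re R + Re P + Re (\<sigma> $$ (b,b)) \<ge> 0"
      using q[of 1] da db by auto
    moreover have "Re (\<sigma> $$ (a,a)) - Re R - Re P + Re (\<sigma> $$ (b,b)) \<ge> 0"
      using q[of "-1"] da db by auto
    moreover have "Re P - Re R = 0" "Re (\<sigma> $$ (a,a)) + Im R - Im P + Re (\<sigma> $$ (b,b)) \<ge> 0"
      using q[of \<i>] da db by (auto simp: algebra_simps)
    moreover have "Re (\<sigma> $$ (a,a)) - Im R + Im P + Re (\<sigma> $$ (b,b)) \<ge> 0"
      using q[of "-\<i>"] da db by (auto simp: algebra_simps)
    ultimately have "\<bar>Re P\<bar> \<le> 1" "\<bar>Im P\<bar> \<le> 1" using da db by linarith+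
    thus ?thesis ..
  qed
  then show ?thesis using cmod_le[of P] unfolding P_def by linarith
qed

definition unity_root :: "nat \<Rightarrow> nat \<Rightarrow> complex" where
  "unity_root d s = cis (2 * pi * real s / real d)"

lemma sum_cnj_unity_root_power_mult:
  assumes jk: "j < d" "k < d"
  shows "(\<Sum>s<d. cnj (unity_root d s) ^ j * unity_root d s ^ k) = (if j = k then of_nat d else 0)"
proof -
  define \<theta> where "\<theta> = 2 * pi * (real k - real j) / real d"
  have "cnj (unity_root d s) ^ j * unity_root d s ^ k = cis \<theta> ^ s" for s
  proof -
    have "real j * (- (2 * pi * real s / real d)) + real k * (2 * pi * real s / real d) = real s * \<theta>"
      by (simp add: \<theta>_def diff_divide_distrib algebra_simps)
    thus ?thesis by (simp add: unity_root_def cis_cnj DeMoivre cis_mult)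
  qed
  hence sum_eq: "(\<Sum>s<d. cnj (unity_root d s) ^ j * unity_root d s ^ k) = (\<Sum>s<d. cis \<theta> ^ s)"
    by simp
  show ?thesis
  proof (cases "j = k")
    case True
    then show ?thesis using sum_eq by (simp add: \<theta>_def)
  next
    case False
    have "cis \<theta> \<noteq> 1"
    proof
      assume "cis \<theta> = 1"
      then have "cos \<theta> = 1" by (metis cis.sel(1) one_complex.sel(1))
      then obtain m :: int where "\<theta> = real_of_int m * 2 * pi" using cos_one_2pi_int by auto
      then have "2 * pi * (real k - real j) = 2 * pi * (real_of_int m * real d)"
        using jk by (simp add: \<theta>_def field_simps)
      then have "real k - real j = real_of_int m * real d"
        by simp
      then have km: "int k - int j = m * int d" by (metis of_int_eq_iff of_int_mult of_int_diff of_int_of_nat_eq)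
      moreover have "\<bar>int k - int j\<bar> < int d" using jk by auto
      ultimately have "\<bar>m\<bar> * int d < 1 * int d" by (simp add: abs_mult)
      then have "\<bar>m\<bar> < 1" using jk by (simp only: mult_less_cancel_right)
      then show False using False km by simp
    qed
    moreover have "cis \<theta> ^ d = 1"
      using jk by (simp add: DeMoivre \<theta>_def)
    ultimately show ?thesis using sum_eq False by (simp add: sum_gp_strict)
  qed
qed

definition basis_diag_mat :: "nat \<Rightarrow> (nat \<Rightarrow> complex vec) \<Rightarrow> (nat \<Rightarrow> complex) \<Rightarrow> complex mat" where
  "basis_diag_mat d e \<alpha> = mat d d (\<lambda>(a,b). \<Sum>s<d. \<alpha> s * (e s $ a * cnj (e s $ b)))"

lemma basis_diag_mat_carrier: "basis_diag_mat d e \<alpha> \<in> carrier_mat d d"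
  by (simp add: basis_diag_mat_def)

lemma phaseV_eq_basis_diag_mat:
  assumes "\<And>s. s < d \<Longrightarrow> e s \<in> carrier_vec d"
  shows "phaseV d e = basis_diag_mat d e (unity_root d)"
proof -
  have "dim_vec (e s) = d" if "s < d" for s using assms[OF that] by simp
  thus ?thesis
    by (auto simp: phaseV_def basis_diag_mat_def msum_def ketbra_def unity_root_def cis_conv_exp
        intro!: eq_matI sum.cong)
qed

definition unbiased :: "nat \<Rightarrow> (nat \<Rightarrow> complex vec) \<Rightarrow> complex vec \<Rightarrow> bool" where
  "unbiased d e f \<longleftrightarrow> f \<in> carrier_vec d \<and> (\<forall>s<d. cmod (braket f (e s)) = 1 / sqrt (real d))"

definition phase_orbit_mat :: "nat \<Rightarrow> (nat \<Rightarrow> complex vec) \<Rightarrow> complex vec \<Rightarrow> complex mat" where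
  "phase_orbit_mat d e f = mat d d (\<lambda>(a,j). (phaseV d e ^\<^sub>m j *\<^sub>v f) $ a)"

context
  fixes d :: nat and e :: "nat \<Rightarrow> complex vec"
  assumes onb: "orthonormal_basis d e"
begin

lemma onb_carrier: "s < d \<Longrightarrow> e s \<in> carrier_vec d"
  using onb by (auto simp: orthonormal_basis_def)

lemma onb_inner:
  assumes "s < d" "t < d"
  shows "(\<Sum>i<d. cnj (e s $ i) * e t $ i) = (if s = t then 1 else 0)"
proof -
  have "braket (e s) (e t) = (if s = t then 1 else 0)" using onb assms by (auto simp: orthonormal_basis_def)
  thus ?thesis using onb_carrier[OF assms(1)] by (simp add: braket_def)
qed

lemma onb_entry_norm_le:
  assumes s: "s < d" and a: "a < d"
  shows "cmod (e s $ a) \<le> 1"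
proof -
  have "complex_of_real (\<Sum>i<d. cmod (e s $ i) ^ 2) = 1"
    using onb_inner[OF s s] by (simp add: cnj_mult_self)
  hence "(\<Sum>i<d. cmod (e s $ i) ^ 2) = 1" using of_real_eq_1_iff by blast
  hence "cmod (e s $ a) ^ 2 \<le> 1" using member_le_sum[of a "{..<d}" "\<lambda>i. cmod (e s $ i) ^ 2"] a by auto
  thus ?thesis by (simp add: power_le_one_iff)
qed

text \<open>The matrix with columns \<open>e s\<close> is unitary, so its rows are orthonormal as well.\<close>

lemma onb_complete:
  assumes ab: "a < d" "b < d"
  shows "(\<Sum>s<d. e s $ a * cnj (e s $ b)) = (if a = b then 1 else 0)"
proof -
  define E where "E = mat d d (\<lambda>(i,s). e s $ i)"
  have E: "E \<in> carrier_mat d d" by (simp add: E_def)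
  have E_entry: "i < d \<Longrightarrow> s < d \<Longrightarrow> E $$ (i,s) = e s $ i" for i s by (simp add: E_def)
  have "mat_adjoint E * E = 1\<^sub>m d"
  proof (rule eq_matI)
    fix i j assume "i < dim_row (1\<^sub>m d :: complex mat)" "j < dim_col (1\<^sub>m d :: complex mat)"
    hence ij: "i < d" "j < d" by auto
    have "(mat_adjoint E * E) $$ (i,j) = (\<Sum>k<d. cnj (e i $ k) * e j $ k)"
      using ij by (subst index_mult_mat_sum[OF mat_adjoint_carrier[OF E] E])
        (auto simp: index_mat_adjoint[OF E] E_entry intro!: sum.cong)
    thus "(mat_adjoint E * E) $$ (i,j) = 1\<^sub>m d $$ (i,j)" using ij onb_inner by simp
  qed (auto simp: E_def mat_adjoint_def)
  hence "E * mat_adjoint E = 1\<^sub>m d"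
    using mat_mult_left_right_inverse[OF mat_adjoint_carrier[OF E] E] by auto
  hence "(E * mat_adjoint E) $$ (a,b) = (if a = b then 1 else 0)" using ab by auto
  thus ?thesis
    using ab by (simp add: index_mult_mat_sum[OF E mat_adjoint_carrier[OF E]] index_mat_adjoint[OF E] E_entry)
qed

lemma basis_diag_mat_one: "basis_diag_mat d e (\<lambda>_. 1) = 1\<^sub>m d"
  by (rule eq_matI) (auto simp: basis_diag_mat_def onb_complete)

lemma mult_basis_diag_mat:
  "basis_diag_mat d e \<alpha> * basis_diag_mat d e \<beta> = basis_diag_mat d e (\<lambda>s. \<alpha> s * \<beta> s)"
proof (rule eq_matI)
  fix a b assume "a < dim_row (basis_diag_mat d e (\<lambda>s. \<alpha> s * \<beta> s))"
    "b < dim_col (basis_diag_mat d e (\<lambda>s. \<alpha> s * \<beta> s))"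
  hence ab: "a < d" "b < d" by (auto simp: basis_diag_mat_def)
  have "(basis_diag_mat d e \<alpha> * basis_diag_mat d e \<beta>) $$ (a,b)
      = (\<Sum>k<d. (\<Sum>s<d. \<alpha> s * (e s $ a * cnj (e s $ k))) * (\<Sum>t<d. \<beta> t * (e t $ k * cnj (e t $ b))))"
    using ab by (subst index_mult_mat_sum[OF basis_diag_mat_carrier basis_diag_mat_carrier])
      (auto simp: basis_diag_mat_def)
  also have "\<dots> = (\<Sum>k<d. \<Sum>s<d. \<Sum>t<d. (\<alpha> s * \<beta> t * e s $ a * cnj (e t $ b)) * (cnj (e s $ k) * e t $ k))"
    by (simp only: sum_product mult_ac)
  also have "\<dots> = (\<Sum>s<d. \<Sum>k<d. \<Sum>t<d. (\<alpha> s * \<beta> t * e s $ a * cnj (e t $ b)) * (cnj (e s $ k) * e t $ k))"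
    by (rule sum.swap)
  also have "\<dots> = (\<Sum>s<d. \<Sum>t<d. \<Sum>k<d. (\<alpha> s * \<beta> t * e s $ a * cnj (e t $ b)) * (cnj (e s $ k) * e t $ k))"
    by (rule sum.cong[OF refl], rule sum.swap)
  also have "\<dots> = (\<Sum>s<d. \<Sum>t<d. (\<alpha> s * \<beta> t * e s $ a * cnj (e t $ b)) * (\<Sum>k<d. cnj (e s $ k) * e t $ k))"
    by (simp only: sum_distrib_left)
  also have "\<dots> = (\<Sum>s<d. \<Sum>t<d. (\<alpha> s * \<beta> t * e s $ a * cnj (e t $ b)) * (if s = t then 1 else 0))"
    by (intro sum.cong refl) (simp add: onb_inner)
  also have "\<dots> = (\<Sum>s<d. \<alpha> s * \<beta> s * (e s $ a * cnj (e s $ b)))"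
    by (simp add: if_distrib sum.delta mult_ac cong: if_cong)
  finally show "(basis_diag_mat d e \<alpha> * basis_diag_mat d e \<beta>) $$ (a,b)
      = basis_diag_mat d e (\<lambda>s. \<alpha> s * \<beta> s) $$ (a,b)"
    using ab by (simp add: basis_diag_mat_def)
qed (auto simp: basis_diag_mat_def)

lemma phaseV_power: "phaseV d e ^\<^sub>m j = basis_diag_mat d e (\<lambda>s. unity_root d s ^ j)"
proof (induction j)
  case 0
  show ?case using basis_diag_mat_one by (simp add: phaseV_def msum_def)
next
  case (Suc j)
  then show ?case by (simp add: phaseV_eq_basis_diag_mat[OF onb_carrier] mult_basis_diag_mat mult.commute)
qed

lemma basis_diag_mat_entry_norm_le:
  assumes \<alpha>: "\<And>s. s < d \<Longrightarrow> cmod (\<alpha> s) \<le> 1" and ab: "a < d" "b < d"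
  shows "cmod (basis_diag_mat d e \<alpha> $$ (a,b)) \<le> real d"
proof -
  have "cmod (basis_diag_mat d e \<alpha> $$ (a,b)) \<le> (\<Sum>s<d. cmod (\<alpha> s) * (cmod (e s $ a) * cmod (e s $ b)))"
    using ab norm_sum[of "\<lambda>s. \<alpha> s * (e s $ a * cnj (e s $ b))" "{..<d}"]
    by (simp add: basis_diag_mat_def norm_mult)
  also have "\<dots> \<le> (\<Sum>s<d. 1)"
    using \<alpha> ab onb_entry_norm_le by (intro sum_mono) (simp add: mult_le_one)
  finally show ?thesis by simp
qed

lemma basis_diag_mat_mult_vec:
  assumes f: "f \<in> carrier_vec d" and a: "a < d"
  shows "(basis_diag_mat d e \<alpha> *\<^sub>v f) $ a = (\<Sum>s<d. \<alpha> s * braket (e s) f * e s $ a)"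
proof -
  have "(basis_diag_mat d e \<alpha> *\<^sub>v f) $ a = (\<Sum>k<d. \<Sum>s<d. (\<alpha> s * e s $ a) * (cnj (e s $ k) * f $ k))"
    by (subst index_mult_mat_vec_sum[OF basis_diag_mat_carrier f a])
      (simp add: basis_diag_mat_def a sum_distrib_left sum_distrib_right mult_ac)
  also have "\<dots> = (\<Sum>s<d. (\<alpha> s * e s $ a) * (\<Sum>k<d. cnj (e s $ k) * f $ k))"
    by (simp only: sum_distrib_left) (rule sum.swap)
  also have "\<dots> = (\<Sum>s<d. \<alpha> s * braket (e s) f * e s $ a)"
    by (intro sum.cong refl) (simp add: braket_eq_sum[OF onb_carrier] mult_ac)
  finally show ?thesis .
qed

lemma index_phase_orbit_mat:
  assumes "f \<in> carrier_vec d" "a < d" "j < d"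
  shows "phase_orbit_mat d e f $$ (a,j) = (\<Sum>s<d. unity_root d s ^ j * braket (e s) f * e s $ a)"
  using assms by (simp add: phase_orbit_mat_def phaseV_power basis_diag_mat_mult_vec)

lemma phase_orbit_mat_unitary:
  assumes "unbiased d e f"
  shows "mat_adjoint (phase_orbit_mat d e f) * phase_orbit_mat d e f = 1\<^sub>m d"
proof (rule eq_matI)
  let ?G = "phase_orbit_mat d e f"
  have G: "?G \<in> carrier_mat d d" by (simp add: phase_orbit_mat_def)
  have f: "f \<in> carrier_vec d" using assms by (simp add: unbiased_def)
  define c where "c s = braket (e s) f" for s
  have c_sq: "cnj (c s) * c s = 1 / of_nat d" if s: "s < d" for s
  proof -
    have "cmod (c s) = 1 / sqrt (real d)"
      using assms s by (simp add: unbiased_def c_def cnj_braket[OF f onb_carrier[OF s], symmetric])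
    thus ?thesis by (simp add: cnj_mult_self power_divide)
  qed
  fix j k assume "j < dim_row (1\<^sub>m d :: complex mat)" "k < dim_col (1\<^sub>m d :: complex mat)"
  hence jk: "j < d" "k < d" by auto
  have "(mat_adjoint ?G * ?G) $$ (j,k)
      = (\<Sum>a<d. cnj (\<Sum>s<d. unity_root d s ^ j * c s * e s $ a) * (\<Sum>t<d. unity_root d t ^ k * c t * e t $ a))"
    using jk by (subst index_mult_mat_sum[OF mat_adjoint_carrier[OF G] G])
      (auto simp: index_mat_adjoint[OF G] index_phase_orbit_mat[OF f] c_def intro!: sum.cong)
  also have "\<dots> = (\<Sum>a<d. \<Sum>s<d. \<Sum>t<d. (cnj (unity_root d s ^ j * c s) * (unity_root d t ^ k * c t))
      * (cnj (e s $ a) * e t $ a))"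
    by (intro sum.cong refl, simp only: cnj_sum sum_product, intro sum.cong refl, simp add: mult_ac)
  also have "\<dots> = (\<Sum>s<d. \<Sum>a<d. \<Sum>t<d. (cnj (unity_root d s ^ j * c s) * (unity_root d t ^ k * c t))
      * (cnj (e s $ a) * e t $ a))"
    by (rule sum.swap)
  also have "\<dots> = (\<Sum>s<d. \<Sum>t<d. (cnj (unity_root d s ^ j * c s) * (unity_root d t ^ k * c t))
      * (\<Sum>a<d. cnj (e s $ a) * e t $ a))"
    by (simp only: sum_distrib_left, rule sum.cong[OF refl], rule sum.swap)
  also have "\<dots> = (\<Sum>s<d. \<Sum>t<d. (cnj (unity_root d s ^ j * c s) * (unity_root d t ^ k * c t))
      * (if s = t then 1 else 0))"
    by (intro sum.cong refl) (simp add: onb_inner)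
  also have "\<dots> = (\<Sum>s<d. (cnj (unity_root d s) ^ j * unity_root d s ^ k) * (cnj (c s) * c s))"
    by (simp add: if_distrib sum.delta mult_ac cong: if_cong)
  also have "\<dots> = (\<Sum>s<d. cnj (unity_root d s) ^ j * unity_root d s ^ k) / of_nat d"
    by (simp add: c_sq sum_divide_distrib)
  also have "\<dots> = 1\<^sub>m d $$ (j,k)"
    using jk by (simp add: sum_cnj_unity_root_power_mult)
  finally show "(mat_adjoint ?G * ?G) $$ (j,k) = 1\<^sub>m d $$ (j,k)" .
qed (auto simp: phase_orbit_mat_def mat_adjoint_def)

lemma unbiased_braket_self:
  assumes "d > 0" and "unbiased d e f"
  shows "braket f f = 1"
proof -
  let ?G = "phase_orbit_mat d e f"
  have G: "?G \<in> carrier_mat d d" by (simp add: phase_orbit_mat_def)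
  have f: "f \<in> carrier_vec d" using assms(2) by (simp add: unbiased_def)
  have "?G $$ (a,0) = f $ a" if "a < d" for a
    using that assms(1) f by (simp add: phase_orbit_mat_def phaseV_def msum_def)
  hence "(mat_adjoint ?G * ?G) $$ (0,0) = braket f f"
    using assms(1) f by (subst index_mult_mat_sum[OF mat_adjoint_carrier[OF G] G])
      (auto simp: index_mat_adjoint[OF G] braket_eq_sum intro!: sum.cong)
  thus ?thesis using phase_orbit_mat_unitary[OF assms(2)] assms(1) by simp
qed

lemma phase_damping_ketbra:
  assumes f: "f \<in> carrier_vec d"
  shows "phase_damping d e lam (ketbra f f)
    = phase_orbit_mat d e f * real_diag_mat d lam * mat_adjoint (phase_orbit_mat d e f)"
proof (rule eq_matI)
  let ?G = "phase_orbit_mat d e f"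
  have G: "?G \<in> carrier_mat d d" by (simp add: phase_orbit_mat_def)
  have GD: "?G * real_diag_mat d lam \<in> carrier_mat d d" using G real_diag_mat_carrier by auto
  have V: "phaseV d e ^\<^sub>m j \<in> carrier_mat d d" for j by (simp add: phaseV_power basis_diag_mat_carrier)
  fix a b assume "a < dim_row (?G * real_diag_mat d lam * mat_adjoint ?G)"
    "b < dim_col (?G * real_diag_mat d lam * mat_adjoint ?G)"
  hence ab: "a < d" "b < d" using G by (auto simp: mat_adjoint_def)
  have "phase_damping d e lam (ketbra f f) $$ (a,b)
      = (\<Sum>j<d. lam j * ((phaseV d e ^\<^sub>m j *\<^sub>v f) $ a * cnj ((phaseV d e ^\<^sub>m j *\<^sub>v f) $ b)))"
    unfolding phase_damping_def index_msum[OF ab]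
  proof (intro sum.cong refl)
    fix j
    have Vf: "phaseV d e ^\<^sub>m j *\<^sub>v f \<in> carrier_vec d" by (rule mult_mat_vec_carrier[OF V f])
    show "(complex_of_real (lam j) \<cdot>\<^sub>m (phaseV d e ^\<^sub>m j * ketbra f f * mat_adjoint (phaseV d e ^\<^sub>m j))) $$ (a,b)
        = lam j * ((phaseV d e ^\<^sub>m j *\<^sub>v f) $ a * cnj ((phaseV d e ^\<^sub>m j *\<^sub>v f) $ b))"
      unfolding mult_ketbra_mult_adjoint[OF V f]
      using ab Vf ketbra_carrier[OF Vf Vf] by (simp add: index_ketbra[OF Vf Vf])
  qed
  also have "\<dots> = (\<Sum>j<d. ?G $$ (a,j) * lam j * cnj (?G $$ (b,j)))"
    using ab by (intro sum.cong refl) (simp add: phase_orbit_mat_def mult_ac)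
  also have "\<dots> = (\<Sum>k<d. (\<Sum>l<d. ?G $$ (a,l) * real_diag_mat d lam $$ (l,k)) * cnj (?G $$ (b,k)))"
    by (intro sum.cong refl) (simp add: real_diag_mat_def if_distrib sum.delta cong: if_cong)
  also have "\<dots> = (?G * real_diag_mat d lam * mat_adjoint ?G) $$ (a,b)"
    using ab by (simp add: index_mult_mat_sum[OF GD mat_adjoint_carrier[OF G]]
        index_mult_mat_sum[OF G real_diag_mat_carrier] index_mat_adjoint[OF G])
  finally show "phase_damping d e lam (ketbra f f) $$ (a,b) = (?G * real_diag_mat d lam * mat_adjoint ?G) $$ (a,b)" .
qed (auto simp: phase_damping_def msum_def phase_orbit_mat_def mat_adjoint_def)

lemma vN_entropy_phase_damping_unbiased:
  assumes "unbiased d e f"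
  shows "vN_entropy (phase_damping d e lam (ketbra f f)) = - (\<Sum>j<d. lam j * ln (lam j))"
proof -
  have f: "f \<in> carrier_vec d" using assms by (simp add: unbiased_def)
  have G: "phase_orbit_mat d e f \<in> carrier_mat d d" by (simp add: phase_orbit_mat_def)
  show ?thesis
    unfolding phase_damping_ketbra[OF f]
    by (rule vN_entropy_unitary_conj_real_diag[OF G phase_orbit_mat_unitary[OF assms]])
qed

lemma phase_damping_entry_norm_le:
  assumes \<sigma>: "density d \<sigma>" and lam: "\<forall>s<d. lam s \<ge> 0" "(\<Sum>s<d. lam s) = 1"
    and ab: "a < d" "b < d"
  shows "cmod (phase_damping d e lam \<sigma> $$ (a,b)) \<le> 2 * real d ^ 4"
proof -
  have S: "\<sigma> \<in> carrier_mat d d" using \<sigma> by (simp add: density_def positive_op_def)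
  have V: "phaseV d e ^\<^sub>m j \<in> carrier_mat d d" for j by (simp add: phaseV_power basis_diag_mat_carrier)
  have V_le: "cmod ((phaseV d e ^\<^sub>m j) $$ (i,k)) \<le> real d" if "i < d" "k < d" for i j k
    using that by (simp add: phaseV_power basis_diag_mat_entry_norm_le unity_root_def norm_power)
  let ?C = "\<lambda>j. phaseV d e ^\<^sub>m j * \<sigma> * mat_adjoint (phaseV d e ^\<^sub>m j)"
  have C: "?C j \<in> carrier_mat d d" for j
    using V S mat_adjoint_carrier[OF V] by (meson mult_carrier_mat)
  have conj_le: "cmod ((?C j) $$ (a,b)) \<le> 2 * real d ^ 4" for j
  proof -
    have "cmod ((phaseV d e ^\<^sub>m j * \<sigma>) $$ (i,k)) \<le> real d * real d * 2" if "i < d" "k < d" for i k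
      by (rule norm_index_mult_mat_le[OF V S V_le density_entry_norm_le[OF \<sigma>]]) (use that in auto)
    moreover have "cmod (mat_adjoint (phaseV d e ^\<^sub>m j) $$ (i,k)) \<le> real d" if "i < d" "k < d" for i k
      using that by (simp add: index_mat_adjoint[OF V] V_le)
    ultimately have "cmod ((phaseV d e ^\<^sub>m j * \<sigma> * mat_adjoint (phaseV d e ^\<^sub>m j)) $$ (a,b))
        \<le> real d * (real d * real d * 2) * real d"
      by (intro norm_index_mult_mat_le[OF mult_carrier_mat[OF V S] mat_adjoint_carrier[OF V] _ _ ab])
    thus ?thesis by (simp add: power4_eq_xxxx mult_ac)
  qed
  have "phase_damping d e lam \<sigma> $$ (a,b) = (\<Sum>j<d. complex_of_real (lam j) * (?C j) $$ (a,b))"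
    using ab carrier_matD[OF C] by (simp add: phase_damping_def index_msum)
  hence "cmod (phase_damping d e lam \<sigma> $$ (a,b)) \<le> (\<Sum>j<d. cmod (complex_of_real (lam j) * (?C j) $$ (a,b)))"
    by (simp add: norm_sum)
  also have "\<dots> = (\<Sum>j<d. lam j * cmod ((?C j) $$ (a,b)))"
    using lam by (intro sum.cong refl) (simp add: norm_mult)
  also have "\<dots> \<le> (\<Sum>j<d. lam j * (2 * real d ^ 4))"
    using lam conj_le by (intro sum_mono mult_left_mono) auto
  also have "\<dots> = 2 * real d ^ 4" using lam by (simp flip: sum_distrib_right)
  finally show ?thesis .
qed

end

lemma H_Phi_le_decomposition:
  assumes bdd: "\<And>\<sigma>. density d \<sigma> \<Longrightarrow> C \<le> vN_entropy (\<Phi> \<sigma>)"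
    and p: "\<forall>j<k. p j \<ge> 0 \<and> density d (\<sigma> j)" "(\<Sum>j<k. p j) = 1"
    and \<rho>: "\<rho> = msum d k (\<lambda>j. complex_of_real (p j) \<cdot>\<^sub>m \<sigma> j)"
  shows "H_Phi d \<Phi> \<rho> \<le> (\<Sum>j<k. p j * vN_entropy (\<Phi> (\<sigma> j)))"
proof -
  let ?S = "{(\<Sum>j<k. p j * vN_entropy (\<Phi> (\<sigma> j))) | k p \<sigma>.
      (\<forall>j<k. p j \<ge> 0 \<and> density d (\<sigma> j)) \<and> (\<Sum>j<k. p j) = 1 \<and>
      \<rho> = msum d k (\<lambda>j. complex_of_real (p j) \<cdot>\<^sub>m \<sigma> j)}"
  have "bdd_below ?S"
  proof (rule bdd_belowI)
    fix x assume "x \<in> ?S"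
    then obtain n :: nat and q \<tau> where x: "x = (\<Sum>j<n. q j * vN_entropy (\<Phi> (\<tau> j)))"
      and q: "\<forall>j<n. q j \<ge> 0 \<and> density d (\<tau> j)" and q1: "(\<Sum>j<n. q j) = 1"
      unfolding mem_Collect_eq by blast
    have "(\<Sum>j<n. q j * C) \<le> x"
      unfolding x using q bdd by (intro sum_mono mult_left_mono) auto
    thus "C \<le> x" using q1 by (simp flip: sum_distrib_right)
  qed
  moreover have "(\<Sum>j<k. p j * vN_entropy (\<Phi> (\<sigma> j))) \<in> ?S" using p \<rho> by blast
  ultimately show ?thesis unfolding H_Phi_def by (rule cInf_lower[rotated])
qed

theorem proposition1:
  fixes d :: nat and e :: "nat \<Rightarrow> complex vec" and lam :: "nat \<Rightarrow> real" and \<rho> :: "complex mat"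
  assumes "d > 0"
    and "orthonormal_basis d e"
    and "\<forall>s<d. lam s \<ge> 0" and "(\<Sum>s<d. lam s) = 1"
    and "\<rho> \<in> mub_states d e"
  shows "H_Phi d (phase_damping d e lam) \<rho> \<le> - (\<Sum>j<d. lam j * ln (lam j))"
proof -
  note onb = assms(2) and lam = assms(3,4)
  obtain k p f where \<rho>: "\<rho> = msum d k (\<lambda>j. complex_of_real (p j) \<cdot>\<^sub>m ketbra (f j) (f j))"
    and pf: "\<forall>j<k. p j \<ge> 0 \<and> unbiased d e (f j)" and p1: "(\<Sum>j<k. p j) = 1"
    using assms(5) unfolding mub_states_def unbiased_def by blast
  have "H_Phi d (phase_damping d e lam) \<rho>
      \<le> (\<Sum>j<k. p j * vN_entropy (phase_damping d e lam (ketbra (f j) (f j))))"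
  proof (rule H_Phi_le_decomposition[OF _ _ p1 \<rho>])
    fix \<sigma> assume "density d \<sigma>"
    then show "- (real d * (1 + (real d * (2 * real d ^ 4))\<^sup>2)) \<le> vN_entropy (phase_damping d e lam \<sigma>)"
      by (intro vN_entropy_lower_bound phase_damping_entry_norm_le[OF onb _ lam])
        (simp_all add: phase_damping_def msum_carrier)
  next
    show "\<forall>j<k. p j \<ge> 0 \<and> density d (ketbra (f j) (f j))"
      using pf unbiased_braket_self[OF onb assms(1)] density_ketbra by (auto simp: unbiased_def)
  qed
  also have "\<dots> = (\<Sum>j<k. p j * - (\<Sum>i<d. lam i * ln (lam i)))"
    using pf by (simp add: vN_entropy_phase_damping_unbiased[OF onb])
  also have "\<dots> = (\<Sum>j<k. p j) * - (\<Sum>i<d. lam i * ln (lam i))"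
    by (rule sum_distrib_right[symmetric])
  also have "\<dots> = - (\<Sum>i<d. lam i * ln (lam i))"
    using p1 by simp
  finally show ?thesis .
qed

end
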